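(* The sequence $$\left\{1-\frac{1}{\log(n+2)}\log\left(\frac{(n+2)\log(n+2)-\log4}{n}\right)\right\}_{n\in\mathbb{N}}$$ is strictly increasing.
   Context: $\mathbb{N}=\{1,2,3,\dots\}$. *)

theory Defs
  imports Complex_Main
begin

definition seq8 :: "nat \<Rightarrow> real" where
  "seq8 n = 1 - (1 / ln (real n + 2)) *
     ln (((real n + 2) * ln (real n + 2) - ln 4) / real n)"

end

theory Submission
  imports Defs "HOL-Analysis.Harmonic_Numbers"
begin

text \<open>
  With \<open>F t = log t ((t ln t - ln 4) / (t - 2))\<close> we have \<open>seq8 n = 1 - F (n + 2)\<close>, so it
  suffices that \<open>F\<close> decreases on \<open>[3, \<infinity>)\<close>. The numerator of \<open>F'\<close> is
  \<open>x ln x (x - 2 ln x - 2 + c) - N D ln (N / D)\<close> with \<open>c = ln 4\<close>, \<open>N = x ln x - c\<close>,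
  \<open>D = x - 2\<close>. Its negativity is a numerical fact: on each piece of a finite cover of
  \<open>[3, \<infinity>)\<close> it follows from a rational lower bound for \<open>ln x\<close> together with
  \<open>ln y \<ge> 2 (y - 1) / (y + 1)\<close> for \<open>y \<ge> 1\<close>.
\<close>

lemma ln_ge_partial_series:
  fixes y :: real
  assumes "1 \<le> y"
  shows "(\<Sum>k<n. 2 * ((y - 1) / (y + 1)) ^ (2*k+1) / of_nat (2*k+1)) \<le> ln y"
proof (cases "y = 1")
  case False
  with assms show ?thesis using ln_approx_bounds[of y n] by simp
qed simp

lemma ln_ge_two_diff_div_sum:
  fixes y :: real
  assumes "1 \<le> y"
  shows "2 * (y - 1) / (y + 1) \<le> ln y"
  using ln_ge_partial_series[OF assms, of 1] by simp

lemma ln_two_ge: "6931/10000 \<le> ln (2::real)"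
  using ln_ge_partial_series[of 2 4] by (simp add: eval_nat_numeral)

lemma ln_four_le: "ln (4::real) \<le> 25/18"
proof -
  have "ln (4::real) = 2 * ln 2"
    using ln_realpow[of 2 2] by simp
  with ln2_le_25_over_36 show ?thesis by simp
qed

lemma ln_pow2_mult_ge:
  fixes a y r :: real
  assumes "a = 2 ^ k * y" "1 \<le> y"
    and "r \<le> real k * (6931/10000) + (\<Sum>i<3. 2 * ((y - 1) / (y + 1)) ^ (2*i+1) / of_nat (2*i+1))"
  shows "r \<le> ln a"
proof -
  have "ln a = real k * ln 2 + ln y"
    using assms(1,2) by (simp add: ln_mult ln_realpow)
  moreover have "real k * (6931/10000) \<le> real k * ln 2"
    using ln_two_ge by (intro mult_left_mono) auto
  ultimately show ?thesis
    using assms(3) ln_ge_partial_series[OF assms(2), of 3] by linarith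
qed

lemma two_diff_div_sum_mono:
  fixes u v :: real
  assumes "0 < u" "u \<le> v"
  shows "2 * (u - 1) / (u + 1) \<le> 2 * (v - 1) / (v + 1)"
proof -
  have "\<And>w::real. 0 < w \<Longrightarrow> 2 * (w - 1) / (w + 1) = 2 - 4 / (w + 1)"
    by (simp add: field_simps)
  moreover have "4 / (v + 1) \<le> 4 / (u + 1)"
    using assms by (intro divide_left_mono) auto
  ultimately show ?thesis
    using assms by simp
qed

text \<open>
  Writing \<open>N = x ln x - c\<close> and \<open>D = x - 2\<close>, the left-hand side factors as
  \<open>N D (1 + c/N) (1 - d)\<close> with \<open>d = (2 ln x - c)/D\<close>, while \<open>N/D = ln x + d\<close>.
  A lower bound \<open>r\<close> for \<open>ln x\<close> and a lower bound \<open>\<delta>\<close> for \<open>d\<close> therefore bound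
  \<open>(1 + c/N) (1 - d)\<close> from above and \<open>ln (N/D)\<close> from below by numbers.
\<close>

lemma log_quotient_numerator_neg_of_bounds:
  fixes x c a r C \<delta> :: real
  assumes "a \<le> x" "2 < a" "r \<le> ln a" "1 < r" "0 \<le> c" "c \<le> C" "C < a * r"
    and "0 \<le> \<delta>" "\<delta> * (x - 2) \<le> 2 * r - C"
    and "(1 + C / (a * r - C)) * (1 - \<delta>) < 2 * (r + \<delta> - 1) / (r + \<delta> + 1)"
  shows "x * ln x * (x - 2 * ln x - 2 + c) < (x * ln x - c) * (x - 2) * ln ((x * ln x - c) / (x - 2))"
proof -
  define L N D where "L = ln x" and "N = x * L - c" and "D = x - 2"
  define d where "d = (2 * L - c) / D"
  have D_pos: "0 < D"
    using assms(1,2) unfolding D_def by simp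
  have "ln a \<le> L"
    using assms(1,2) unfolding L_def by simp
  hence r_le_L: "r \<le> L"
    using assms(3) by simp
  have "a * r \<le> x * L"
    using assms(1,2,4) r_le_L by (intro mult_mono) auto
  hence N_ge: "a * r - C \<le> N"
    using assms(6) unfolding N_def by simp
  hence N_pos: "0 < N"
    using assms(7) by simp
  have quotient_eq: "N / D = L + d"
    using D_pos unfolding N_def D_def d_def by (simp add: field_simps)
  have "\<delta> * D \<le> 2 * L - c"
    using assms(6,9) r_le_L unfolding D_def by simp
  hence delta_le: "\<delta> \<le> d"
    unfolding d_def using D_pos by (simp add: pos_le_divide_eq)
  have "2 * (r + \<delta> - 1) / (r + \<delta> + 1) \<le> 2 * (N / D - 1) / (N / D + 1)"
    using assms(4,8) quotient_eq r_le_L delta_le by (intro two_diff_div_sum_mono) auto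
  also have "\<dots> \<le> ln (N / D)"
    using assms(4,8) quotient_eq r_le_L delta_le by (intro ln_ge_two_diff_div_sum) auto
  finally have ln_quotient_ge: "2 * (r + \<delta> - 1) / (r + \<delta> + 1) \<le> ln (N / D)" .
  have ln_quotient_pos: "0 < ln (N / D)"
    using assms(4,8) quotient_eq r_le_L delta_le by simp
  have factor_bound: "(1 + c / N) * (1 - d) < ln (N / D)"
  proof (cases "1 - d \<le> 0")
    case True
    have "(1 + c / N) * (1 - d) \<le> 0"
      using True N_pos assms(5) by (intro mult_nonneg_nonpos) auto
    with ln_quotient_pos show ?thesis by linarith
  next
    case False
    have "c / N \<le> C / (a * r - C)"
      using N_pos N_ge assms(5-7) by (intro frac_le) auto
    hence "(1 + c / N) * (1 - d) \<le> (1 + C / (a * r - C)) * (1 - \<delta>)"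
      using False delta_le N_pos assms(5-7) by (intro mult_mono) auto
    with assms(10) ln_quotient_ge show ?thesis by linarith
  qed
  have "N * (1 + c / N) = x * L"
    using N_pos unfolding N_def by (simp add: field_simps)
  moreover have "D * (1 - d) = x - 2 * L - 2 + c"
    using D_pos unfolding D_def d_def by (simp add: field_simps)
  ultimately have "x * L * (x - 2 * L - 2 + c) = (N * (1 + c / N)) * (D * (1 - d))"
    by simp
  also have "\<dots> = N * D * ((1 + c / N) * (1 - d))"
    by (simp only: mult_ac)
  also have "\<dots> < N * D * ln (N / D)"
    using factor_bound N_pos D_pos by simp
  finally show ?thesis
    unfolding L_def N_def D_def .
qed

lemma log_quotient_numerator_neg_on_interval:
  fixes x c a b r C :: real
  assumes "a \<le> x" "x \<le> b" "2 < a" "r \<le> ln a" "1 < r" "0 \<le> c" "c \<le> C" "C < a * r"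
    and "C \<le> 2 * r"
    and "(1 + C / (a * r - C)) * (1 - (2 * r - C) / (b - 2))
          < 2 * (r + (2 * r - C) / (b - 2) - 1) / (r + (2 * r - C) / (b - 2) + 1)"
  shows "x * ln x * (x - 2 * ln x - 2 + c) < (x * ln x - c) * (x - 2) * ln ((x * ln x - c) / (x - 2))"
proof (rule log_quotient_numerator_neg_of_bounds[OF assms(1,3-8) _ _ assms(10)])
  show "0 \<le> (2 * r - C) / (b - 2)"
    using assms(1-3,9) by simp
  have "(2 * r - C) / (b - 2) * (x - 2) \<le> (2 * r - C) / (b - 2) * (b - 2)"
    using assms(1-3,9) by (intro mult_left_mono) auto
  thus "(2 * r - C) / (b - 2) * (x - 2) \<le> 2 * r - C"
    using assms(1-3) by simp
qed

lemma log_quotient_numerator_neg: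
  fixes x c :: real
  assumes "3 \<le> x" "0 \<le> c" "c \<le> 25/18"
  shows "x * ln x * (x - 2 * ln x - 2 + c) < (x * ln x - c) * (x - 2) * ln ((x * ln x - c) / (x - 2))"
proof -
  note on_interval =
    log_quotient_numerator_neg_on_interval[where c = c and C = "25/18", OF _ _ _ _ _ assms(2,3)]
  consider "x \<le> 25/8"
    | "25/8 \<le> x" "x \<le> 13/4"
    | "13/4 \<le> x" "x \<le> 7/2"
    | "7/2 \<le> x" "x \<le> 31/8"
    | "31/8 \<le> x" "x \<le> 35/8"
    | "35/8 \<le> x" "x \<le> 41/8"
    | "41/8 \<le> x" "x \<le> 51/8"
    | "51/8 \<le> x" "x \<le> 35/4"
    | "35/4 \<le> x" "x \<le> 29/2"
    | "29/2 \<le> x" "x \<le> 24"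
    | "24 \<le> x"
    by linarith
  then show ?thesis
  proof cases
    case 1
    show ?thesis
      by (rule on_interval[of "3" x "25/8" "549/500"])
        (use assms(1) 1 ln_pow2_mult_ge[of "3" 1 "3/2" "549/500"] in \<open>simp_all add: eval_nat_numeral\<close>)
  next
    case 2
    show ?thesis
      by (rule on_interval[of "25/8" x "13/4" "1139/1000"])
        (use assms(1) 2 ln_pow2_mult_ge[of "25/8" 1 "25/16" "1139/1000"] in \<open>simp_all add: eval_nat_numeral\<close>)
  next
    case 3
    show ?thesis
      by (rule on_interval[of "13/4" x "7/2" "589/500"])
        (use assms(1) 3 ln_pow2_mult_ge[of "13/4" 1 "13/8" "589/500"] in \<open>simp_all add: eval_nat_numeral\<close>)
  next
    case 4
    show ?thesis
      by (rule on_interval[of "7/2" x "31/8" "313/250"])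
        (use assms(1) 4 ln_pow2_mult_ge[of "7/2" 1 "7/4" "313/250"] in \<open>simp_all add: eval_nat_numeral\<close>)
  next
    case 5
    show ?thesis
      by (rule on_interval[of "31/8" x "35/8" "677/500"])
        (use assms(1) 5 ln_pow2_mult_ge[of "31/8" 1 "31/16" "677/500"] in \<open>simp_all add: eval_nat_numeral\<close>)
  next
    case 6
    show ?thesis
      by (rule on_interval[of "35/8" x "41/8" "59/40"])
        (use assms(1) 6 ln_pow2_mult_ge[of "35/8" 2 "35/32" "59/40"] in \<open>simp_all add: eval_nat_numeral\<close>)
  next
    case 7
    show ?thesis
      by (rule on_interval[of "41/8" x "51/8" "817/500"])
        (use assms(1) 7 ln_pow2_mult_ge[of "41/8" 2 "41/32" "817/500"] in \<open>simp_all add: eval_nat_numeral\<close>)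
  next
    case 8
    show ?thesis
      by (rule on_interval[of "51/8" x "35/4" "463/250"])
        (use assms(1) 8 ln_pow2_mult_ge[of "51/8" 2 "51/32" "463/250"] in \<open>simp_all add: eval_nat_numeral\<close>)
  next
    case 9
    show ?thesis
      by (rule on_interval[of "35/4" x "29/2" "271/125"])
        (use assms(1) 9 ln_pow2_mult_ge[of "35/4" 3 "35/32" "271/125"] in \<open>simp_all add: eval_nat_numeral\<close>)
  next
    case 10
    show ?thesis
      by (rule on_interval[of "29/2" x "24" "2673/1000"])
        (use assms(1) 10 ln_pow2_mult_ge[of "29/2" 3 "29/16" "2673/1000"] in \<open>simp_all add: eval_nat_numeral\<close>)
  next
    case 11
    show ?thesis
      by (rule log_quotient_numerator_neg_of_bounds[of 24 x "3177/1000" c "25/18" 0])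
        (use assms 11 ln_pow2_mult_ge[of 24 4 "3/2" "3177/1000"] in \<open>simp_all add: eval_nat_numeral\<close>)
  qed
qed

lemma has_real_derivative_log_quotient:
  fixes c t :: real
  assumes "2 < t" "c < t * ln t"
  shows "((\<lambda>s. log s ((s * ln s - c) / (s - 2))) has_real_derivative
      (t * ln t * (t - 2 * ln t - 2 + c) - (t * ln t - c) * (t - 2) * ln ((t * ln t - c) / (t - 2)))
        / (t * (t * ln t - c) * (t - 2) * (ln t)\<^sup>2)) (at t)"
proof -
  have t_pos: "0 < t" and ln_pos: "0 < ln t" and N_pos: "0 < t * ln t - c" and D_pos: "0 < t - 2"
    using assms by simp_all
  have "((\<lambda>s. (s * ln s - c) / (s - 2)) has_real_derivative (t - 2 * ln t - 2 + c) / (t - 2)\<^sup>2) (at t)"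
    using t_pos D_pos by (auto intro!: derivative_eq_intros simp: field_simps power2_eq_square)
  from DERIV_chain2[OF DERIV_ln_divide this]
  have "((\<lambda>s. ln ((s * ln s - c) / (s - 2))) has_real_derivative
      1 / ((t * ln t - c) / (t - 2)) * ((t - 2 * ln t - 2 + c) / (t - 2)\<^sup>2)) (at t)"
    using N_pos D_pos by simp
  from DERIV_divide[OF this DERIV_ln_divide[OF t_pos]]
  have "((\<lambda>s. ln ((s * ln s - c) / (s - 2)) / ln s) has_real_derivative
      (1 / ((t * ln t - c) / (t - 2)) * ((t - 2 * ln t - 2 + c) / (t - 2)\<^sup>2) * ln t
        - ln ((t * ln t - c) / (t - 2)) * (1 / t)) / (ln t * ln t)) (at t)"
    using ln_pos by simp
  moreover have "(1 / (N / D) * (A / D\<^sup>2) * L - Q * (1 / t)) / (L * L)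
      = (t * L * A - N * D * Q) / (t * N * D * L\<^sup>2)"
    if "N \<noteq> 0" "D \<noteq> 0" "L \<noteq> 0" for N D A L Q :: real
    using that t_pos by (simp add: field_simps power2_eq_square)
  ultimately show ?thesis
    unfolding log_def using N_pos D_pos ln_pos by simp
qed

lemma log_quotient_decreasing:
  fixes c s t :: real
  assumes "0 \<le> c" "c \<le> 25/18" "3 \<le> s" "s < t"
  shows "log t ((t * ln t - c) / (t - 2)) < log s ((s * ln s - c) / (s - 2))"
proof (rule DERIV_neg_imp_decreasing[OF assms(4)])
  fix x :: real
  assume "s \<le> x" "x \<le> t"
  hence x_ge: "3 \<le> x"
    using assms(3) by simp
  have "1 \<le> 2 * (x - 1) / (x + 1)"
    using x_ge by (simp add: field_simps)
  also have "\<dots> \<le> ln x"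
    using x_ge by (intro ln_ge_two_diff_div_sum) simp
  finally have "1 \<le> ln x" .
  hence "3 * 1 \<le> x * ln x"
    using x_ge by (intro mult_mono) auto
  hence N_pos: "0 < x * ln x - c"
    using assms(2) by simp
  have "0 < x * (x * ln x - c) * (x - 2) * (ln x)\<^sup>2"
    using x_ge N_pos \<open>1 \<le> ln x\<close> by simp
  moreover have "x * ln x * (x - 2 * ln x - 2 + c) - (x * ln x - c) * (x - 2) * ln ((x * ln x - c) / (x - 2)) < 0"
    using log_quotient_numerator_neg[OF x_ge assms(1,2)] by simp
  ultimately show "\<exists>y. ((\<lambda>s. log s ((s * ln s - c) / (s - 2))) has_real_derivative y) (at x) \<and> y < 0"
    using has_real_derivative_log_quotient[of x c] x_ge N_pos divide_neg_pos by fastforce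
qed

theorem lemma8p2:
  shows "strict_mono_on {1..} seq8"
proof (rule strict_mono_onI)
  fix m n :: nat
  assume "m \<in> {1..}" "n \<in> {1..}" "m < n"
  have seq8_eq: "seq8 k = 1 - log (real k + 2) (((real k + 2) * ln (real k + 2) - ln 4) / (real k + 2 - 2))"
    for k
    unfolding seq8_def log_def by simp
  have "log (real n + 2) (((real n + 2) * ln (real n + 2) - ln 4) / (real n + 2 - 2))
      < log (real m + 2) (((real m + 2) * ln (real m + 2) - ln 4) / (real m + 2 - 2))"
    using \<open>m \<in> {1..}\<close> \<open>m < n\<close> ln_four_le by (intro log_quotient_decreasing) auto
  then show "seq8 m < seq8 n"
    unfolding seq8_eq by simp
qed

end
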